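(* Let $r\ge2$ and $\ell\ge r-1$. Then every semi-valid tuple of length $2\ell+1$ in $\Omega_n$ is $r$-valid.
   Context: $\Omega_n=\{v_0,\dots,v_{n-1}\}$ with cyclic order $v_0<\dots<v_{n-1}<v_0$. For distinct vertices $u,w$, $[u,w]$ is the set consisting of $u$, $w$ and all vertices met when moving clockwise from $u$ to $w$. A tuple $C=(w_1,\dots,w_{2\ell+1})$ of distinct vertices is semi-valid if $w_1<w_3<\dots<w_{2\ell+1}<w_2<w_4<\dots<w_{2\ell}<w_1$ in clockwise cyclic order, and $r$-valid if moreover $|[w_i,w_{i-1}]|\ge r$ for all $i$ (indices mod $2\ell+1$). *)

theory Defs
  imports Main
begin

text \<open>Vertices of \<Omega>_n are v_0,...,v_{n-1}, represented by the naturals 0,...,n-1;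
  clockwise successor of v_i is v_{(i+1) mod n}.\<close>

definition vertex :: "nat \<Rightarrow> nat \<Rightarrow> bool" where
  "vertex n v \<longleftrightarrow> v < n"

text \<open>A list of distinct vertices a_1,...,a_k is in clockwise cyclic order
  a_1 < a_2 < ... < a_k < a_1 iff some rotation of it is strictly increasing.\<close>
definition cyc_ordered :: "nat list \<Rightarrow> bool" where
  "cyc_ordered xs \<longleftrightarrow> (\<exists>k. sorted_wrt (<) (rotate k xs))"

text \<open>The clockwise arc [u,w]: u, w and every vertex met going clockwise from u to w.\<close>
definition arc :: "nat \<Rightarrow> nat \<Rightarrow> nat \<Rightarrow> nat set" where
  "arc n u w = {(u + j) mod n | j. j \<le> (w + n - u) mod n}"

text \<open>A tuple C = (w_1,...,w_{2l+1}) is encoded as a list ws with w_i = ws ! (i-1).\<close>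
definition semi_valid :: "nat \<Rightarrow> nat \<Rightarrow> nat list \<Rightarrow> bool" where
  "semi_valid n l ws \<longleftrightarrow>
     length ws = 2 * l + 1 \<and> distinct ws \<and> (\<forall>v \<in> set ws. vertex n v) \<and>
     cyc_ordered (map (\<lambda>j. ws ! (2 * j)) [0..<l + 1] @ map (\<lambda>j. ws ! (2 * j + 1)) [0..<l])"

definition r_valid :: "nat \<Rightarrow> nat \<Rightarrow> nat \<Rightarrow> nat list \<Rightarrow> bool" where
  "r_valid n r l ws \<longleftrightarrow> semi_valid n l ws \<and>
     (\<forall>i < length ws. card (arc n (ws ! i) (ws ! ((i + length ws - 1) mod length ws))) \<ge> r)"

end

theory Submission
  imports Defs
begin

text \<open>List the tuple as w_1, w_3, ..., w_{2l+1}, w_2, ..., w_{2l}, which is clockwise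
  ordered by semi-validity. In this list, w_{i-1} always sits l places after w_i (cyclically), and
  the l - 1 entries in between all lie on the clockwise arc from w_i to w_{i-1}. Hence that arc has
  at least l + 1 \<ge> r vertices.\<close>

lemma arc_eq_atLeastAtMost:
  assumes "u \<le> w" "w < n"
  shows "arc n u w = {u..w}"
proof -
  have width: "(w + n - u) mod n = w - u"
    using assms by (simp add: less_diff_conv2 mod_if)
  have "x \<in> arc n u w" if "x \<in> {u..w}" for x
  proof -
    from that assms have "x = (u + (x - u)) mod n" "x - u \<le> w - u" by auto
    then show ?thesis unfolding arc_def width by blast
  qed
  moreover have "(u + j) mod n \<in> {u..w}" if "j \<le> w - u" for j
    using that assms by simp
  ultimately show ?thesis unfolding arc_def width by blast
qed

lemma arc_eq_wrap:
  assumes "w < u" "u < n"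
  shows "arc n u w = {u..<n} \<union> {..w}"
proof -
  have width: "(w + n - u) mod n = w + n - u"
    using assms by simp
  have "(u + j) mod n \<in> {u..<n} \<union> {..w}" if "j \<le> w + n - u" for j
    using that assms by (cases "u + j < n") (auto simp: mod_if)
  moreover have "x \<in> arc n u w" if "x \<in> {u..<n} \<union> {..w}" for x
  proof (cases "u \<le> x")
    case True
    with that assms have "x = (u + (x - u)) mod n" "x - u \<le> w + n - u" by auto
    then show ?thesis unfolding arc_def width by blast
  next
    case False
    with that assms have "x = (u + (x + n - u)) mod n" "x + n - u \<le> w + n - u" by auto
    then show ?thesis unfolding arc_def width by blast
  qed
  ultimately show ?thesis unfolding arc_def width by blast
qed

lemma card_nth_image:
  assumes "distinct xs" "I \<subseteq> {..<length xs}"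
  shows "card (nth xs ` I) = card I"
  using assms by (intro card_image inj_on_nth) auto

lemma card_arc_sorted:
  assumes sorted: "sorted_wrt (<) S" and bounded: "\<forall>x \<in> set S. x < n"
    and a: "a < length S" and d: "d < length S"
  shows "d + 1 \<le> card (arc n (S ! a) (S ! ((a + d) mod length S)))"
proof -
  define m where "m = length S"
  have dist: "distinct S" and mono: "\<And>i j. i \<le> j \<Longrightarrow> j < m \<Longrightarrow> S ! i \<le> S ! j"
    using sorted by (auto simp: strict_sorted_iff m_def intro: sorted_nth_mono)
  have vertices: "S ! i < n" if "i < m" for i
    using that bounded m_def by auto
  show ?thesis
  proof (cases "a + d < m")
    case True
    let ?b = "a + d"
    have "nth S ` {a..?b} \<subseteq> arc n (S ! a) (S ! ?b)"
      using True mono vertices by (auto simp: arc_eq_atLeastAtMost)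
    moreover have "card (nth S ` {a..?b}) = d + 1"
      using True dist m_def by (subst card_nth_image) auto
    moreover have "finite (arc n (S ! a) (S ! ?b))"
      using True mono vertices by (simp add: arc_eq_atLeastAtMost)
    ultimately show ?thesis
      using True m_def by (metis card_mono mod_less)
  next
    case False
    define b where "b = a + d - m"
    have b: "(a + d) mod m = b" "b < a"
      using False a d m_def by (auto simp: b_def mod_if)
    have "S ! b < S ! a"
      using sorted b a m_def by (simp add: sorted_wrt_nth_less)
    then have arc: "arc n (S ! a) (S ! b) = {S ! a..<n} \<union> {..S ! b}"
      using a vertices m_def by (intro arc_eq_wrap) auto
    have "nth S ` ({a..<m} \<union> {..b}) \<subseteq> arc n (S ! a) (S ! b)"
      unfolding arc using mono vertices b a m_def by auto
    moreover have "card (nth S ` ({a..<m} \<union> {..b})) = d + 1"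
    proof -
      have "card ({a..<m} \<union> {..b}) = (m - a) + (b + 1)"
        using b by (subst card_Un_disjoint) auto
      then show ?thesis
        using dist a b False m_def by (subst card_nth_image) (auto simp: b_def)
    qed
    ultimately show ?thesis
      using b m_def arc by (metis card_mono finite_Un finite_atLeastLessThan finite_atMost)
  qed
qed

lemma card_arc_cyc_ordered:
  assumes cyc: "cyc_ordered xs" and bounded: "\<forall>x \<in> set xs. x < n"
    and a: "a < length xs" and d: "d < length xs"
  shows "d + 1 \<le> card (arc n (xs ! a) (xs ! ((a + d) mod length xs)))"
proof -
  define m where "m = length xs"
  obtain k where sorted: "sorted_wrt (<) (rotate k xs)"
    using cyc unfolding cyc_ordered_def by blast
  define S where "S = rotate k xs"
  define c where "c = (m - 1) * k"
  have m0: "0 < m" using a unfolding m_def by linarith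
  have "(c + k) mod m = 0"
    using m0 by (simp add: c_def diff_mult_distrib)
  then have "xs = rotate c S"
    by (simp add: S_def rotate_rotate m_def)
  then have shift: "xs ! j = S ! ((c + j) mod m)" if "j < m" for j
    using that m_def S_def by (metis length_rotate nth_rotate)
  have "(c + (a + d) mod m) mod m = ((c + a) mod m + d) mod m"
    by (metis add.assoc mod_add_left_eq mod_add_right_eq)
  then have ends: "xs ! a = S ! ((c + a) mod m)"
      "xs ! ((a + d) mod m) = S ! (((c + a) mod m + d) mod m)"
    using a m0 shift m_def by auto
  have "d + 1 \<le> card (arc n (S ! ((c + a) mod m)) (S ! (((c + a) mod m + d) mod m)))"
    using card_arc_sorted[OF sorted[folded S_def], of n "(c + a) mod m" d] bounded d m0
    by (simp add: S_def m_def)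
  then show ?thesis
    unfolding m_def[symmetric] ends .
qed

text \<open>Since 2 (l + 1) \<equiv> 1 (mod 2l + 1), the (0-based) entry ws ! i of the interleaved list sits at
  position (l + 1) i mod (2l + 1), and its cyclic predecessor ws ! (i - 1) l places further on.\<close>

lemma interleaving_eq_map_double_mod:
  assumes "length ws = 2 * l + 1"
  shows "map (\<lambda>j. ws ! (2 * j)) [0..<l + 1] @ map (\<lambda>j. ws ! (2 * j + 1)) [0..<l]
       = map (\<lambda>p. ws ! (2 * p mod (2 * l + 1))) [0..<2 * l + 1]"
proof (rule nth_equalityI)
  fix p assume "p < length (map (\<lambda>j. ws ! (2 * j)) [0..<l + 1] @ map (\<lambda>j. ws ! (2 * j + 1)) [0..<l])"
  then have p: "p < 2 * l + 1" by simp
  show "(map (\<lambda>j. ws ! (2 * j)) [0..<l + 1] @ map (\<lambda>j. ws ! (2 * j + 1)) [0..<l]) ! p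
      = map (\<lambda>p. ws ! (2 * p mod (2 * l + 1))) [0..<2 * l + 1] ! p"
  proof (cases "p < l + 1")
    case False
    then have "2 * p = 2 * (p - (l + 1)) + 1 + (2 * l + 1)"
      by simp
    moreover have j: "p - (l + 1) < l"
      using p False by simp
    ultimately have "2 * p mod (2 * l + 1) = 2 * (p - (l + 1)) + 1"
      by (simp only: mod_add_self2 mod_less)
    with p False j show ?thesis by (simp add: nth_append del: upt_Suc)
  qed (use p in \<open>simp add: nth_append del: upt_Suc\<close>)
qed simp

lemma double_half_index_mod_odd:
  fixes m l i :: nat
  assumes m: "m = 2 * l + 1" and i: "i < m"
  shows "2 * ((l + 1) * i mod m) mod m = i"
    and "2 * (((l + 1) * i mod m + l) mod m) mod m = (i + m - 1) mod m"
proof -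
  have "2 * ((l + 1) * i mod m) mod m = (m * i + i) mod m"
    by (simp add: m mod_mult_right_eq algebra_simps)
  then show first: "2 * ((l + 1) * i mod m) mod m = i"
    using i by simp
  have "2 * (((l + 1) * i mod m + l) mod m) mod m = (2 * ((l + 1) * i mod m) mod m + 2 * l) mod m"
    by (simp add: mod_mult_right_eq mod_add_left_eq distrib_left)
  then show "2 * (((l + 1) * i mod m + l) mod m) mod m = (i + m - 1) mod m"
    unfolding first by (simp add: m)
qed

theorem lemma3p11:
  fixes n r l :: nat and ws :: "nat list"
  assumes "r \<ge> 2" and "l \<ge> r - 1" and "semi_valid n l ws"
  shows "r_valid n r l ws"
  unfolding r_valid_def
proof (intro conjI allI impI)
  define m where "m = 2 * l + 1"
  define L where "L = map (\<lambda>p. ws ! (2 * p mod m)) [0..<m]"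
  have len: "length ws = m" and bounded: "\<forall>x \<in> set ws. x < n" and "cyc_ordered L"
    using assms(3) interleaving_eq_map_double_mod[of ws l]
    unfolding semi_valid_def vertex_def m_def L_def by auto
  moreover have "\<forall>x \<in> set L. x < n" and "length L = m"
    using bounded len m_def by (auto simp: L_def)
  moreover fix i assume "i < length ws"
  moreover define p where "p = (l + 1) * i mod m"
  ultimately have "l + 1 \<le> card (arc n (L ! p) (L ! ((p + l) mod m)))"
    using card_arc_cyc_ordered[of L n p l] m_def by simp
  moreover have "L ! p = ws ! i" "L ! ((p + l) mod m) = ws ! ((i + m - 1) mod m)"
    using double_half_index_mod_odd[OF m_def, of i] \<open>i < length ws\<close> len \<open>length L = m\<close>
    by (simp_all add: L_def p_def)
  ultimately show "r \<le> card (arc n (ws ! i) (ws ! ((i + length ws - 1) mod length ws)))"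
    using assms(1,2) len by simp
qed (rule assms(3))

end
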